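(* Let $(E,\rho)$ be a Polish metric space and $\{P(t)\}_{t\geq 0}$ a Markov semigroup of stochastic kernels on $E$. Let $V:E\to[0,\infty)$ be continuous and assume: (a) $\{P(t)\}$ has a unique invariant probability measure $\mu_*$, and there are $\gamma>0$ and a map $C:\{\nu\in\mathcal{M}_1(E):\int V\,d\nu<\infty\}\to[0,\infty)$ with $d_{\mathrm{FM}}(\nu P(t),\mu_* )\leq C(\nu)e^{-\gamma t}$ for all $t\geq 0$ and all such $\nu$, where $C(\delta_x)=\bar C(x):=\varkappa(V(x)+1)^{1/2}$ for some $\varkappa>0$; (b) there exist $A,B\geq 0$, $\Gamma>0$ with $P(t)V^2(x)\leq Ae^{-\Gamma t}V^2(x)+B$ for all $x\in E$, $t\geq 0$. Then for every $p\in(0,4]$: $\sup_{t\geq 0}\int_E\bar C^p\,d(\nu P(t))<\infty$ whenever $\nu\in\mathcal{M}_1(E)$ satisfies $\int_E V^2\,d\nu<\infty$; and $\int_E\bar C^p\,d\mu_*<\infty$. In particular $\int_E V^2\,d\mu_*<\infty$.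
   Context: $\mathcal{M}_1(E)$: Borel probability measures on $E$. $d_{\mathrm{FM}}(\mu,\nu)=\sup\{|\int f\,d\mu-\int f\,d\nu|: \|f\|_{\mathrm{BL}}\leq 1\}$, where $\|f\|_{\mathrm{BL}}=\max\{\|f\|_\infty,\sup_{x\neq y}|f(x)-f(y)|/\rho(x,y)\}$. $\nu P(t)(\cdot)=\int_E P(t)(x,\cdot)\,\nu(dx)$; invariance means $\mu_*P(t)=\mu_*$ for all $t$. *)

theory Defs
  imports "HOL-Probability.Probability"
begin

definition prob_measures :: "'a::topological_space measure set" where
  "prob_measures = {\<nu>. prob_space \<nu> \<and> sets \<nu> = sets borel}"

definition BL_unit :: "('a::metric_space \<Rightarrow> real) set" where
  "BL_unit = {f. (\<forall>x. \<bar>f x\<bar> \<le> 1) \<and> (\<forall>x y. x \<noteq> y \<longrightarrow> \<bar>f x - f y\<bar> / dist x y \<le> 1)}"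

definition d_FM :: "'a::metric_space measure \<Rightarrow> 'a measure \<Rightarrow> real" where
  "d_FM \<mu> \<nu> = (SUP f\<in>BL_unit. \<bar>(\<integral>x. f x \<partial>\<mu>) - (\<integral>x. f x \<partial>\<nu>)\<bar>)"

text \<open>Markov semigroup of stochastic kernels; P t x is the measure P(t)(x,.).\<close>
definition markov_semigroup :: "(real \<Rightarrow> 'a::topological_space \<Rightarrow> 'a measure) \<Rightarrow> bool" where
  "markov_semigroup P \<longleftrightarrow>
     (\<forall>t\<ge>0. P t \<in> borel \<rightarrow>\<^sub>M prob_algebra borel) \<and>
     (\<forall>x. P 0 x = return borel x) \<and>
     (\<forall>s\<ge>0. \<forall>t\<ge>0. \<forall>x. P (s + t) x = P s x \<bind> P t)"

definition act :: "'a measure \<Rightarrow> (real \<Rightarrow> 'a \<Rightarrow> 'a measure) \<Rightarrow> real \<Rightarrow> 'a measure" where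
  "act \<nu> P t = \<nu> \<bind> P t"

definition invariant :: "(real \<Rightarrow> 'a::topological_space \<Rightarrow> 'a measure) \<Rightarrow> 'a measure \<Rightarrow> bool" where
  "invariant P \<mu> \<longleftrightarrow> \<mu> \<in> prob_measures \<and> (\<forall>t\<ge>0. act \<mu> P t = \<mu>)"

end

(* For p <= 4, (kappa * sqrt (V + 1))^p <= 2 kappa^p (V^2 + 1).
   Integrating (b) against nu bounds the second moment of nu P(t) by A int V^2 dnu + B, uniformly
   in t.  For the invariant measure, invariance and the concavity of w |-> min w n give
   int min (V^2) n dmu* <= int min (A exp (-Gamma t) V^2 + B) n dmu*; letting t -> oo (bounded
   convergence) and then n -> oo (monotone convergence) yields int V^2 dmu* <= B. *)

theory Submission
  imports Defs
begin

lemma SUP_min_of_nat_ennreal: "(SUP n. min (a::ennreal) (of_nat n)) = a"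
proof -
  have "(SUP n. min a (of_nat n)) = inf a (SUP n. of_nat n)"
    by (simp add: inf_SUP flip: inf_min)
  then show ?thesis by (simp add: ennreal_SUP_of_nat_eq_top)
qed

lemma nn_integral_eq_SUP_truncation:
  assumes [measurable]: "f \<in> borel_measurable M"
  shows "(\<integral>\<^sup>+x. f x \<partial>M) = (SUP n. \<integral>\<^sup>+x. min (f x) (of_nat n) \<partial>M)"
proof -
  have "incseq (\<lambda>n x. min (f x) (of_nat n))"
    by (intro incseq_SucI le_funI min.mono) auto
  then have "(SUP n. \<integral>\<^sup>+x. min (f x) (of_nat n) \<partial>M) = (\<integral>\<^sup>+x. (SUP n. min (f x) (of_nat n)) \<partial>M)"
    by (intro nn_integral_monotone_convergence_SUP[symmetric]) auto
  then show ?thesis by (simp add: SUP_min_of_nat_ennreal)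
qed

lemma (in prob_space) nn_integral_min_const_le:
  "(\<integral>\<^sup>+x. min (f x) c \<partial>M) \<le> min (\<integral>\<^sup>+x. f x \<partial>M) c"
proof (rule min.boundedI)
  show "(\<integral>\<^sup>+x. min (f x) c \<partial>M) \<le> (\<integral>\<^sup>+x. f x \<partial>M)"
    by (intro nn_integral_mono) simp
  have "(\<integral>\<^sup>+x. min (f x) c \<partial>M) \<le> (\<integral>\<^sup>+x. c \<partial>M)"
    by (intro nn_integral_mono) simp
  then show "(\<integral>\<^sup>+x. min (f x) c \<partial>M) \<le> c"
    by (simp add: emeasure_space_1)
qed

lemma (in finite_measure) nn_integral_min_const_tendsto:
  fixes g :: "nat \<Rightarrow> 'a \<Rightarrow> ennreal"
  assumes [measurable]: "\<And>k. g k \<in> borel_measurable M" "l \<in> borel_measurable M"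
    and lim: "\<And>x. (\<lambda>k. g k x) \<longlonglongrightarrow> l x" and "c < \<infinity>"
  shows "(\<lambda>k. \<integral>\<^sup>+x. min (g k x) c \<partial>M) \<longlonglongrightarrow> (\<integral>\<^sup>+x. min (l x) c \<partial>M)"
proof (rule nn_integral_dominated_convergence[where w = "\<lambda>_. c"])
  show "(\<integral>\<^sup>+x. c \<partial>M) < \<infinity>"
    using \<open>c < \<infinity>\<close> by (simp add: ennreal_mult_eq_top_iff less_top[symmetric])
  show "AE x in M. (\<lambda>k. min (g k x) c) \<longlonglongrightarrow> min (l x) c"
    using lim by (intro AE_I2 tendsto_min tendsto_const)
qed auto

lemma powr_sqrt_succ_le:
  fixes v \<kappa> p :: real
  assumes "v \<ge> 0" "\<kappa> \<ge> 0" "0 < p" "p \<le> 4"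
  shows "(\<kappa> * sqrt (v + 1)) powr p \<le> 2 * \<kappa> powr p * (v\<^sup>2 + 1)"
proof -
  have "sqrt (v + 1) \<ge> 1" using assms by simp
  then have "sqrt (v + 1) powr p \<le> sqrt (v + 1) powr 4"
    using assms by (intro powr_mono) auto
  also have "\<dots> = (v + 1)\<^sup>2"
    using assms by (simp add: powr_numeral power4_eq_xxxx power2_eq_square)
  also have "\<dots> \<le> 2 * (v\<^sup>2 + 1)"
    using zero_le_power2[of "v - 1"] by (simp add: power2_eq_square algebra_simps)
  finally have "sqrt (v + 1) powr p \<le> 2 * (v\<^sup>2 + 1)" .
  then have "\<kappa> powr p * sqrt (v + 1) powr p \<le> \<kappa> powr p * (2 * (v\<^sup>2 + 1))"
    by (rule mult_left_mono) simp
  then show ?thesis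
    using assms by (simp add: powr_mult algebra_simps)
qed

lemma prob_measures_eq_space_prob_algebra: "prob_measures = space (prob_algebra borel)"
  by (auto simp: prob_measures_def space_prob_algebra)

lemma markov_semigroup_kernel:
  assumes "markov_semigroup P" "t \<ge> 0"
  shows "P t \<in> borel \<rightarrow>\<^sub>M prob_algebra borel"
  using assms unfolding markov_semigroup_def by blast

lemma markov_semigroup_prob_space:
  assumes "markov_semigroup P" "t \<ge> 0"
  shows "prob_space (P t x)"
  using measurable_space[OF markov_semigroup_kernel[OF assms], of x]
  by (simp add: space_prob_algebra)

lemma act_in_prob_measures:
  assumes "markov_semigroup P" "t \<ge> 0" "\<nu> \<in> prob_measures"
  shows "act \<nu> P t \<in> prob_measures"
proof -
  note kernel = markov_semigroup_kernel[OF assms(1,2)]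
  have \<nu>: "\<nu> \<in> space (prob_algebra borel)"
    using assms(3) by (simp add: prob_measures_eq_space_prob_algebra)
  show ?thesis
    using prob_space_bind'[OF \<nu> kernel] sets_bind'[OF \<nu> kernel]
    by (simp add: act_def prob_measures_def)
qed

lemma nn_integral_act:
  assumes "markov_semigroup P" "t \<ge> 0" "sets \<nu> = sets borel" "f \<in> borel_measurable borel"
  shows "(\<integral>\<^sup>+x. f x \<partial>act \<nu> P t) = (\<integral>\<^sup>+x. \<integral>\<^sup>+y. f y \<partial>P t x \<partial>\<nu>)"
proof -
  have "P t \<in> \<nu> \<rightarrow>\<^sub>M subprob_algebra borel"
    using measurable_prob_algebraD[OF markov_semigroup_kernel[OF assms(1,2)]]
    by (simp cong: measurable_cong_sets[OF assms(3) refl])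
  then show ?thesis
    unfolding act_def by (rule nn_integral_bind[OF assms(4)])
qed

lemma nn_integral_invariant_min_le:
  fixes P :: "real \<Rightarrow> 'a::topological_space \<Rightarrow> 'a measure"
  assumes P: "markov_semigroup P" and inv: "invariant P \<mu>" and "t \<ge> 0"
    and [measurable]: "f \<in> borel_measurable borel"
  shows "(\<integral>\<^sup>+x. min (f x) c \<partial>\<mu>) \<le> (\<integral>\<^sup>+x. min (\<integral>\<^sup>+y. f y \<partial>P t x) c \<partial>\<mu>)"
proof -
  have sets_\<mu>: "sets \<mu> = sets borel" and "act \<mu> P t = \<mu>"
    using inv \<open>t \<ge> 0\<close> unfolding invariant_def prob_measures_def by auto
  then have "(\<integral>\<^sup>+x. min (f x) c \<partial>\<mu>) = (\<integral>\<^sup>+x. \<integral>\<^sup>+y. min (f y) c \<partial>P t x \<partial>\<mu>)"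
    using nn_integral_act[OF P \<open>t \<ge> 0\<close> sets_\<mu>, of "\<lambda>y. min (f y) c"] by simp
  also have "\<dots> \<le> (\<integral>\<^sup>+x. min (\<integral>\<^sup>+y. f y \<partial>P t x) c \<partial>\<mu>)"
  proof (intro nn_integral_mono)
    fix x
    interpret prob_space "P t x"
      using markov_semigroup_prob_space[OF P \<open>t \<ge> 0\<close>] by simp
    show "(\<integral>\<^sup>+y. min (f y) c \<partial>P t x) \<le> min (\<integral>\<^sup>+y. f y \<partial>P t x) c"
      by (rule nn_integral_min_const_le)
  qed
  finally show ?thesis .
qed

lemma nn_integral_invariant_le_drift_constant:
  fixes P :: "real \<Rightarrow> 'a::topological_space \<Rightarrow> 'a measure" and W :: "'a \<Rightarrow> real"
  assumes P: "markov_semigroup P" and inv: "invariant P \<mu>"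
    and [measurable]: "W \<in> borel_measurable borel" and "\<Gamma> > 0"
    and drift: "\<forall>x. \<forall>t\<ge>0. (\<integral>\<^sup>+y. ennreal (W y) \<partial>P t x) \<le> ennreal (A * exp (- \<Gamma> * t) * W x + B)"
  shows "(\<integral>\<^sup>+x. ennreal (W x) \<partial>\<mu>) \<le> ennreal B"
proof -
  have "sets \<mu> = sets borel" and "prob_space \<mu>"
    using inv unfolding invariant_def prob_measures_def by auto
  interpret \<mu>: prob_space \<mu> by fact
  have [measurable_cong]: "sets \<mu> = sets borel" by fact
  have "(\<lambda>k. exp (- \<Gamma>) ^ k) \<longlonglongrightarrow> 0"
    using \<open>\<Gamma> > 0\<close> by (intro LIMSEQ_power_zero) simp
  then have decay: "(\<lambda>k. exp (- \<Gamma> * real k)) \<longlonglongrightarrow> 0"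
    by (simp add: exp_of_nat_mult[symmetric] mult.commute)
  have drift_lim: "(\<lambda>k. ennreal (A * exp (- \<Gamma> * real k) * W x + B)) \<longlonglongrightarrow> ennreal B" for x
  proof -
    have "(\<lambda>k. A * exp (- \<Gamma> * real k) * W x + B) \<longlonglongrightarrow> A * 0 * W x + B"
      using decay by (intro tendsto_intros)
    then show ?thesis
      by (intro tendsto_ennrealI) simp
  qed
  have "(\<integral>\<^sup>+x. min (ennreal (W x)) (of_nat n) \<partial>\<mu>) \<le> ennreal B" for n
  proof -
    have "(\<integral>\<^sup>+x. min (ennreal (W x)) (of_nat n) \<partial>\<mu>)
        \<le> (\<integral>\<^sup>+x. min (ennreal (A * exp (- \<Gamma> * real k) * W x + B)) (of_nat n) \<partial>\<mu>)" for k
    proof -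
      have "(\<integral>\<^sup>+x. min (ennreal (W x)) (of_nat n) \<partial>\<mu>)
          \<le> (\<integral>\<^sup>+x. min (\<integral>\<^sup>+y. ennreal (W y) \<partial>P (real k) x) (of_nat n) \<partial>\<mu>)"
        by (rule nn_integral_invariant_min_le[OF P inv]) auto
      also have "\<dots> \<le> (\<integral>\<^sup>+x. min (ennreal (A * exp (- \<Gamma> * real k) * W x + B)) (of_nat n) \<partial>\<mu>)"
        using drift by (intro nn_integral_mono min.mono) auto
      finally show ?thesis .
    qed
    moreover have "(\<lambda>k. \<integral>\<^sup>+x. min (ennreal (A * exp (- \<Gamma> * real k) * W x + B)) (of_nat n) \<partial>\<mu>)
        \<longlonglongrightarrow> (\<integral>\<^sup>+x. min (ennreal B) (of_nat n) \<partial>\<mu>)"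
      by (intro \<mu>.nn_integral_min_const_tendsto drift_lim) (auto simp: of_nat_less_top)
    ultimately have "(\<integral>\<^sup>+x. min (ennreal (W x)) (of_nat n) \<partial>\<mu>) \<le> (\<integral>\<^sup>+x. min (ennreal B) (of_nat n) \<partial>\<mu>)"
      by (intro LIMSEQ_le_const) auto
    also have "\<dots> \<le> ennreal B"
      by (simp add: \<mu>.emeasure_space_1)
    finally show ?thesis .
  qed
  then show ?thesis
    by (subst nn_integral_eq_SUP_truncation) (auto intro: SUP_least)
qed

lemma nn_integral_act_le_drift:
  fixes P :: "real \<Rightarrow> 'a::topological_space \<Rightarrow> 'a measure" and W :: "'a \<Rightarrow> real"
  assumes P: "markov_semigroup P" and "t \<ge> 0" and \<nu>: "\<nu> \<in> prob_measures"
    and [measurable]: "W \<in> borel_measurable borel" and W_nonneg: "\<forall>x. W x \<ge> 0"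
    and "A \<ge> 0" "B \<ge> 0" "\<Gamma> \<ge> 0"
    and drift: "\<forall>x. \<forall>t\<ge>0. (\<integral>\<^sup>+y. ennreal (W y) \<partial>P t x) \<le> ennreal (A * exp (- \<Gamma> * t) * W x + B)"
  shows "(\<integral>\<^sup>+x. ennreal (W x) \<partial>act \<nu> P t) \<le> ennreal A * (\<integral>\<^sup>+x. ennreal (W x) \<partial>\<nu>) + ennreal B"
proof -
  have sets_\<nu>: "sets \<nu> = sets borel" and "prob_space \<nu>"
    using \<nu> unfolding prob_measures_def by auto
  have [measurable_cong]: "sets \<nu> = sets borel" by (fact sets_\<nu>)
  have drift_le: "ennreal (A * exp (- \<Gamma> * t) * W x + B) \<le> ennreal A * ennreal (W x) + ennreal B" for x
  proof -
    have "A * exp (- \<Gamma> * t) * W x \<le> A * W x"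
      using \<open>A \<ge> 0\<close> \<open>\<Gamma> \<ge> 0\<close> \<open>t \<ge> 0\<close> W_nonneg
      by (intro mult_right_mono mult_left_le) auto
    then have "ennreal (A * exp (- \<Gamma> * t) * W x + B) \<le> ennreal (A * W x + B)"
      by (intro ennreal_leI) simp
    also have "\<dots> = ennreal A * ennreal (W x) + ennreal B"
      using \<open>A \<ge> 0\<close> \<open>B \<ge> 0\<close> W_nonneg by (simp add: ennreal_plus ennreal_mult)
    finally show ?thesis .
  qed
  have "(\<integral>\<^sup>+x. ennreal (W x) \<partial>act \<nu> P t) = (\<integral>\<^sup>+x. \<integral>\<^sup>+y. ennreal (W y) \<partial>P t x \<partial>\<nu>)"
    using \<open>t \<ge> 0\<close> by (intro nn_integral_act[OF P _ sets_\<nu>]) auto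
  also have "\<dots> \<le> (\<integral>\<^sup>+x. ennreal A * ennreal (W x) + ennreal B \<partial>\<nu>)"
    using drift drift_le \<open>t \<ge> 0\<close> by (intro nn_integral_mono order.trans[OF _ drift_le]) auto
  also have "\<dots> = ennreal A * (\<integral>\<^sup>+x. ennreal (W x) \<partial>\<nu>) + ennreal B"
    using prob_space.emeasure_space_1[OF \<open>prob_space \<nu>\<close>] by (simp add: nn_integral_add nn_integral_cmult)
  finally show ?thesis .
qed

lemma nn_integral_powr_sqrt_succ_le:
  fixes V :: "'a::topological_space \<Rightarrow> real"
  assumes M: "M \<in> prob_measures" and [measurable]: "V \<in> borel_measurable borel"
    and V_nonneg: "\<forall>x. V x \<ge> 0" and "\<kappa> \<ge> 0" "0 < p" "p \<le> 4"
  shows "(\<integral>\<^sup>+x. ennreal ((\<kappa> * sqrt (V x + 1)) powr p) \<partial>M)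
    \<le> ennreal (2 * \<kappa> powr p) * ((\<integral>\<^sup>+x. ennreal ((V x)\<^sup>2) \<partial>M) + 1)"
proof -
  have sets_M: "sets M = sets borel" and "prob_space M"
    using M unfolding prob_measures_def by auto
  have [measurable_cong]: "sets M = sets borel" by (fact sets_M)
  have "(\<integral>\<^sup>+x. ennreal ((\<kappa> * sqrt (V x + 1)) powr p) \<partial>M)
      \<le> (\<integral>\<^sup>+x. ennreal (2 * \<kappa> powr p) * (ennreal ((V x)\<^sup>2) + 1) \<partial>M)"
  proof (intro nn_integral_mono)
    fix x
    have "(\<kappa> * sqrt (V x + 1)) powr p \<le> 2 * \<kappa> powr p * ((V x)\<^sup>2 + 1)"
      using powr_sqrt_succ_le V_nonneg assms(4-) by blast
    then have "ennreal ((\<kappa> * sqrt (V x + 1)) powr p) \<le> ennreal (2 * \<kappa> powr p * ((V x)\<^sup>2 + 1))"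
      by (rule ennreal_leI)
    also have "\<dots> = ennreal (2 * \<kappa> powr p) * (ennreal ((V x)\<^sup>2) + 1)"
      by (simp add: ennreal_mult' ennreal_plus)
    finally show "ennreal ((\<kappa> * sqrt (V x + 1)) powr p) \<le> ennreal (2 * \<kappa> powr p) * (ennreal ((V x)\<^sup>2) + 1)" .
  qed
  also have "\<dots> = ennreal (2 * \<kappa> powr p) * ((\<integral>\<^sup>+x. ennreal ((V x)\<^sup>2) \<partial>M) + 1)"
    using prob_space.emeasure_space_1[OF \<open>prob_space M\<close>] by (simp add: nn_integral_add nn_integral_cmult)
  finally show ?thesis .
qed

lemma nn_integral_act_powr_sqrt_succ_le:
  fixes P :: "real \<Rightarrow> 'a::topological_space \<Rightarrow> 'a measure" and V :: "'a \<Rightarrow> real"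
  assumes P: "markov_semigroup P" and "t \<ge> 0" and \<nu>: "\<nu> \<in> prob_measures"
    and [measurable]: "V \<in> borel_measurable borel" and V_nonneg: "\<forall>x. V x \<ge> 0"
    and AB: "A \<ge> 0" "B \<ge> 0" and "\<Gamma> \<ge> 0"
    and drift: "\<forall>x. \<forall>t\<ge>0. (\<integral>\<^sup>+y. ennreal ((V y)\<^sup>2) \<partial>P t x)
                  \<le> ennreal (A * exp (- \<Gamma> * t) * (V x)\<^sup>2 + B)"
    and p: "\<kappa> \<ge> 0" "0 < p" "p \<le> 4"
  shows "(\<integral>\<^sup>+x. ennreal ((\<kappa> * sqrt (V x + 1)) powr p) \<partial>act \<nu> P t)
    \<le> ennreal (2 * \<kappa> powr p) * (ennreal A * (\<integral>\<^sup>+x. ennreal ((V x)\<^sup>2) \<partial>\<nu>) + ennreal B + 1)"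
proof -
  have "(\<integral>\<^sup>+x. ennreal ((\<kappa> * sqrt (V x + 1)) powr p) \<partial>act \<nu> P t)
      \<le> ennreal (2 * \<kappa> powr p) * ((\<integral>\<^sup>+x. ennreal ((V x)\<^sup>2) \<partial>act \<nu> P t) + 1)"
    by (rule nn_integral_powr_sqrt_succ_le[OF act_in_prob_measures[OF P \<open>t \<ge> 0\<close> \<nu>] _ V_nonneg p]) simp
  also have "\<dots> \<le> ennreal (2 * \<kappa> powr p) * (ennreal A * (\<integral>\<^sup>+x. ennreal ((V x)\<^sup>2) \<partial>\<nu>) + ennreal B + 1)"
    by (intro mult_left_mono add_right_mono nn_integral_act_le_drift[OF P \<open>t \<ge> 0\<close> \<nu> _ _ AB \<open>\<Gamma> \<ge> 0\<close> drift])
      auto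
  finally show ?thesis .
qed

theorem corollary3p4:
  fixes P :: "real \<Rightarrow> 'a::polish_space \<Rightarrow> 'a measure"
    and V :: "'a \<Rightarrow> real"
    and \<mu>s :: "'a measure"
    and C :: "'a measure \<Rightarrow> real"
    and \<gamma> \<kappa> A B \<Gamma> :: real
  assumes sg: "markov_semigroup P"
    and V_cont: "continuous_on UNIV V"
    and V_nonneg: "\<forall>x. V x \<ge> 0"
    and inv: "invariant P \<mu>s"
    and uniq: "\<forall>\<mu>. invariant P \<mu> \<longrightarrow> \<mu> = \<mu>s"
    and gamma_pos: "\<gamma> > 0"
    and C_nonneg: "\<forall>\<nu>\<in>prob_measures. (\<integral>\<^sup>+x. ennreal (V x) \<partial>\<nu>) < \<infinity> \<longrightarrow> C \<nu> \<ge> 0"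
    and conv: "\<forall>\<nu>\<in>prob_measures. (\<integral>\<^sup>+x. ennreal (V x) \<partial>\<nu>) < \<infinity> \<longrightarrow>
                 (\<forall>t\<ge>0. d_FM (act \<nu> P t) \<mu>s \<le> C \<nu> * exp (- \<gamma> * t))"
    and kappa_pos: "\<kappa> > 0"
    and C_dirac: "\<forall>x. C (return borel x) = \<kappa> * sqrt (V x + 1)"
    and AB: "A \<ge> 0" "B \<ge> 0" and Gamma_pos: "\<Gamma> > 0"
    and lyap: "\<forall>x. \<forall>t\<ge>0. (\<integral>\<^sup>+y. ennreal ((V y)\<^sup>2) \<partial>(P t x))
                  \<le> ennreal (A * exp (- \<Gamma> * t) * (V x)\<^sup>2 + B)"
  shows "(\<forall>p::real. 0 < p \<and> p \<le> 4 \<longrightarrow>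
            (\<forall>\<nu>\<in>prob_measures. (\<integral>\<^sup>+x. ennreal ((V x)\<^sup>2) \<partial>\<nu>) < \<infinity> \<longrightarrow>
               (SUP t\<in>{0..}. \<integral>\<^sup>+x. ennreal ((\<kappa> * sqrt (V x + 1)) powr p) \<partial>(act \<nu> P t)) < \<infinity>) \<and>
            (\<integral>\<^sup>+x. ennreal ((\<kappa> * sqrt (V x + 1)) powr p) \<partial>\<mu>s) < \<infinity>)
         \<and> (\<integral>\<^sup>+x. ennreal ((V x)\<^sup>2) \<partial>\<mu>s) < \<infinity>"
proof -
  have [measurable]: "V \<in> borel_measurable borel"
    using V_cont by (rule borel_measurable_continuous_onI)
  have "\<mu>s \<in> prob_measures" and act_\<mu>s: "act \<mu>s P 0 = \<mu>s"
    using inv by (auto simp: invariant_def)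
  have stationary_V2: "(\<integral>\<^sup>+x. ennreal ((V x)\<^sup>2) \<partial>\<mu>s) \<le> ennreal B"
    by (rule nn_integral_invariant_le_drift_constant[OF sg inv _ Gamma_pos lyap]) simp
  have stationary_V2_finite: "(\<integral>\<^sup>+x. ennreal ((V x)\<^sup>2) \<partial>\<mu>s) < \<infinity>"
    by (rule le_less_trans[OF stationary_V2]) simp
  have orbit: "(SUP t\<in>{0..}. \<integral>\<^sup>+x. ennreal ((\<kappa> * sqrt (V x + 1)) powr p) \<partial>(act \<nu> P t)) < \<infinity>"
    if p: "0 < p" "p \<le> 4" and \<nu>: "\<nu> \<in> prob_measures" "(\<integral>\<^sup>+x. ennreal ((V x)\<^sup>2) \<partial>\<nu>) < \<infinity>"
    for p \<nu>
  proof -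
    have "(SUP t\<in>{0..}. \<integral>\<^sup>+x. ennreal ((\<kappa> * sqrt (V x + 1)) powr p) \<partial>(act \<nu> P t))
        \<le> ennreal (2 * \<kappa> powr p) * (ennreal A * (\<integral>\<^sup>+x. ennreal ((V x)\<^sup>2) \<partial>\<nu>) + ennreal B + 1)"
      using kappa_pos Gamma_pos
      by (intro SUP_least nn_integral_act_powr_sqrt_succ_le[OF sg _ \<nu>(1) _ V_nonneg AB _ lyap _ p]) auto
    also have "\<dots> < \<infinity>"
      using \<nu>(2) by (simp add: ennreal_mult_less_top)
    finally show ?thesis .
  qed
  have stationary: "(\<integral>\<^sup>+x. ennreal ((\<kappa> * sqrt (V x + 1)) powr p) \<partial>\<mu>s) < \<infinity>"
    if p: "0 < p" "p \<le> 4" for p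
  proof -
    have "(\<integral>\<^sup>+x. ennreal ((\<kappa> * sqrt (V x + 1)) powr p) \<partial>\<mu>s)
        = (\<integral>\<^sup>+x. ennreal ((\<kappa> * sqrt (V x + 1)) powr p) \<partial>(act \<mu>s P 0))"
      by (simp add: act_\<mu>s)
    also have "\<dots> \<le> (SUP t\<in>{0..}. \<integral>\<^sup>+x. ennreal ((\<kappa> * sqrt (V x + 1)) powr p) \<partial>(act \<mu>s P t))"
      by (rule SUP_upper) simp
    also have "\<dots> < \<infinity>"
      by (rule orbit[OF p \<open>\<mu>s \<in> prob_measures\<close> stationary_V2_finite])
    finally show ?thesis .
  qed
  show ?thesis
    using orbit stationary stationary_V2_finite by blast
qed

end
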